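(* Let $p\ge3$ and $k\ge1$ be integers, $Q=2^{p-1}$, and for $1\le j\le k$ let $g_j(\alpha)=j\alpha^{p-1}-(k-j+1)-(j-1)(1+\alpha)^{p-1}$. Then for every integer $j$ with $k^{\frac1{p-1}}+1\le j\le k$ we have $g_j\big(Q(j-1)\big)>0$. Consequently the smallest positive root $a_j$ of $g_j$ satisfies $a_j<2^{p-1}(j-1)$ for such $j$. *)

theory Defs
  imports Complex_Main
begin

definition gfun :: "nat \<Rightarrow> nat \<Rightarrow> nat \<Rightarrow> real \<Rightarrow> real" where
  "gfun p k j \<alpha> = real j * \<alpha> ^ (p - 1) - (real k - real j + 1) - (real j - 1) * (1 + \<alpha>) ^ (p - 1)"

definition is_smallest_pos_root :: "(real \<Rightarrow> real) \<Rightarrow> real \<Rightarrow> bool" where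
  "is_smallest_pos_root f a \<longleftrightarrow> a > 0 \<and> f a = 0 \<and> (\<forall>b. b > 0 \<and> f b = 0 \<longrightarrow> a \<le> b)"

end

theory Submission
  imports Defs
begin

text \<open>Put n = p - 1, y = j - 1 and x = 2^n y. For x \<ge> 1 all binomial coefficients of
  (1 + x)^n except the leading one can be absorbed into (2^n - 1) x^(n-1), so
  g_j(x) \<ge> x^n - y (2^n - 1) x^(n-1) - (k - j + 1) = y x^(n-1) - (k - j + 1),
  and y x^(n-1) \<ge> y^n \<ge> k by the hypothesis on j. As g_j(0) = -k < 0, the intermediate value
  theorem puts a root of g_j in (0, x), hence the smallest positive root below x.\<close>

lemma one_plus_power_le:
  fixes x :: real
  assumes "x \<ge> 1"
  shows "(1 + x) ^ Suc m \<le> x ^ Suc m + (2 ^ Suc m - 1) * x ^ m"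
proof (induction m)
  case 0
  then show ?case by simp
next
  case (Suc m)
  have "(2::real) ^ Suc m \<ge> 1"
    by (rule one_le_power) simp
  moreover have "x ^ m \<le> x ^ Suc m"
    using assms by (simp add: power_increasing)
  ultimately have absorb: "(2 ^ Suc m - 1) * x ^ m \<le> (2 ^ Suc m - 1) * x ^ Suc m"
    by (intro mult_left_mono) simp_all
  have "(1 + x) ^ Suc (Suc m) = (1 + x) * (1 + x) ^ Suc m"
    by simp
  also have "\<dots> \<le> (1 + x) * (x ^ Suc m + (2 ^ Suc m - 1) * x ^ m)"
    using Suc assms by (intro mult_left_mono) auto
  also have "\<dots> = x ^ Suc (Suc m) + 2 ^ Suc m * x ^ Suc m + (2 ^ Suc m - 1) * x ^ m"
    by (simp add: algebra_simps)
  also have "\<dots> \<le> x ^ Suc (Suc m) + (2 ^ Suc (Suc m) - 1) * x ^ Suc m"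
    using absorb by (simp add: algebra_simps)
  finally show ?case .
qed

lemma continuous_on_gfun: "continuous_on UNIV (gfun p k j)"
  unfolding gfun_def by (intro continuous_intros)

lemma gfun_zero:
  assumes "p \<ge> 2"
  shows "gfun p k j 0 = - real k"
  using assms unfolding gfun_def by (simp add: power_0_left)

lemma gfun_pos:
  fixes p k j :: nat
  assumes "p \<ge> 2" and "k \<ge> 1" and "root (p - 1) (real k) + 1 \<le> real j"
  shows "gfun p k j (2 ^ (p - 1) * (real j - 1)) > 0"
proof -
  define n where "n = p - 1"
  obtain m where n_Suc: "n = Suc m"
    using assms(1) unfolding n_def by (metis Suc_diff_Suc Suc_1 Suc_le_lessD diff_Suc_1)
  define y where "y = real j - 1"
  define x where "x = 2 ^ n * y"
  have root_ge: "1 \<le> root n (real k)"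
    using assms(2) n_Suc by (simp add: real_root_ge_1_iff)
  have root_le: "root n (real k) \<le> y"
    using assms(3) by (simp add: n_def y_def)
  have y_ge: "y \<ge> 1"
    using root_ge root_le by simp
  have k_le: "real k \<le> y ^ n"
  proof -
    have "root n (real k) ^ n = real k"
      by (rule real_root_pow_pos2) (simp_all add: n_Suc)
    moreover have "root n (real k) ^ n \<le> y ^ n"
      using root_ge root_le by (intro power_mono) auto
    ultimately show ?thesis
      by simp
  qed
  have x_ge: "x \<ge> 1"
  proof -
    have "(1::real) \<le> 2 ^ n"
      by simp
    then show ?thesis
      unfolding x_def using y_ge by (metis mult_mono' mult_1 zero_le_one)
  qed
  have "y * (1 + x) ^ n \<le> y * (x ^ n + (2 ^ n - 1) * x ^ m)"
    using one_plus_power_le[OF x_ge] y_ge n_Suc by (intro mult_left_mono) auto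
  then have "(y + 1) * x ^ n - (real k - real j + 1) - y * (x ^ n + (2 ^ n - 1) * x ^ m) \<le> gfun p k j x"
    unfolding gfun_def n_def y_def by simp
  moreover have "(y + 1) * x ^ n - (real k - real j + 1) - y * (x ^ n + (2 ^ n - 1) * x ^ m)
      = x * x ^ m - y * (2 ^ n - 1) * x ^ m - (real k - real j + 1)"
    using n_Suc by (simp add: algebra_simps)
  moreover have "x * x ^ m - y * (2 ^ n - 1) * x ^ m = y * x ^ m"
    unfolding x_def by (simp add: algebra_simps)
  moreover have "y * x ^ m = 2 ^ (n * m) * y ^ n"
    unfolding x_def using n_Suc
    by (simp add: power_mult_distrib power_mult[symmetric] power_add[symmetric] algebra_simps)
  ultimately have "2 ^ (n * m) * y ^ n - (real k - real j + 1) \<le> gfun p k j x"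
    by linarith
  moreover have "2 ^ (n * m) * y ^ n \<ge> y ^ n"
    using y_ge by simp
  ultimately have "gfun p k j x > 0"
    using k_le y_ge unfolding y_def by linarith
  then show ?thesis
    by (simp add: x_def y_def n_def)
qed

lemma smallest_pos_root_exists:
  fixes f :: "real \<Rightarrow> real"
  assumes "continuous_on UNIV f" and "f 0 < 0" and "x > 0" and "f x > 0"
  shows "\<exists>a. is_smallest_pos_root f a"
proof -
  define Z where "Z = {0..x} \<inter> f -` {0}"
  have "compact Z"
    unfolding Z_def using assms(1)
    by (intro compact_Int_closed compact_Icc closed_vimage) auto
  moreover have "Z \<noteq> {}"
  proof -
    obtain c where "0 \<le> c" "c \<le> x" "f c = 0"
      using IVT[of f 0 0 x] assms
      by (auto intro: continuous_on_subset simp: continuous_on_eq_continuous_at)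
    then show ?thesis
      unfolding Z_def by auto
  qed
  ultimately obtain a where "a \<in> Z" and a_min: "\<forall>b\<in>Z. a \<le> b"
    using compact_attains_inf by blast
  then have "0 \<le> a" "a \<le> x" "f a = 0"
    unfolding Z_def by auto
  with assms(2) have "0 < a"
    by (cases "a = 0") auto
  have "a \<le> b" if "0 < b" "f b = 0" for b
  proof (cases "b \<le> x")
    case True
    with that have "b \<in> Z"
      unfolding Z_def by simp
    with a_min show ?thesis
      by blast
  next
    case False
    with \<open>a \<le> x\<close> show ?thesis
      by simp
  qed
  with \<open>0 < a\<close> \<open>f a = 0\<close> have "is_smallest_pos_root f a"
    unfolding is_smallest_pos_root_def by blast
  then show ?thesis ..
qed

lemma smallest_pos_root_less:
  fixes f :: "real \<Rightarrow> real"
  assumes "is_smallest_pos_root f a"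
    and "continuous_on UNIV f" and "f 0 < 0" and "x > 0" and "f x > 0"
  shows "a < x"
proof -
  obtain c where "0 \<le> c" "c \<le> x" "f c = 0"
    using IVT[of f 0 0 x] assms(2-5)
    by (auto intro: continuous_on_subset simp: continuous_on_eq_continuous_at)
  with assms(3,5) have "0 < c" "c < x"
    by (auto simp: le_less)
  with \<open>f c = 0\<close> assms(1) show ?thesis
    unfolding is_smallest_pos_root_def by fastforce
qed

theorem mainTheorem8:
  fixes p k j :: nat
  assumes "p \<ge> 3" and "k \<ge> 1"
    and "root (p - 1) (real k) + 1 \<le> real j" and "j \<le> k"
  shows "gfun p k j (2 ^ (p - 1) * (real j - 1)) > 0
         \<and> (\<exists>a. is_smallest_pos_root (gfun p k j) a)
         \<and> (\<forall>a. is_smallest_pos_root (gfun p k j) a \<longrightarrow> a < 2 ^ (p - 1) * (real j - 1))"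
proof -
  define x where "x = 2 ^ (p - 1) * (real j - 1)"
  have pos: "gfun p k j x > 0"
    unfolding x_def using assms(1-3) by (intro gfun_pos) simp_all
  have neg: "gfun p k j 0 < 0"
    using assms(1,2) by (simp add: gfun_zero)
  have "1 \<le> root (p - 1) (real k)"
    using assms(1,2) by (simp add: real_root_ge_1_iff)
  with assms(3) have "x > 0"
    unfolding x_def by simp
  obtain a where "is_smallest_pos_root (gfun p k j) a"
    using smallest_pos_root_exists[OF continuous_on_gfun neg \<open>x > 0\<close> pos] ..
  moreover have "\<forall>a. is_smallest_pos_root (gfun p k j) a \<longrightarrow> a < x"
    using smallest_pos_root_less[OF _ continuous_on_gfun neg \<open>x > 0\<close> pos] by blast
  ultimately show ?thesis
    using pos unfolding x_def by blast
qed

end
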